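(* Let $a, b$ be natural numbers with $a, b > 0$, and let $d > 1$ be a natural number. (1) $a$ and $b$ are relatively prime if and only if there are $r, s \in \mathbb{N}_0$ such that $(a-1)(b-1) = ra + sb$. (2) Suppose $a$ and $b$ are divisible by $d$. Then $\gcd(a,b) = d$ if and only if there are $r, s \in \mathbb{N}_0$ such that $d(a/d - 1)(b/d - 1) = ra + sb$.
   Context: $\mathbb{N}_0$ denotes the set of natural numbers including $0$. *)

theory Defs
  imports Main
begin

end

theory Submission
  imports Defs "HOL-Number_Theory.Cong"
begin

text \<open>For coprime \<open>a, b\<close> every \<open>n \<ge> (a - 1)(b - 1)\<close> is a non-negative combination
  \<open>x a + y b\<close> (Sylvester): choosing \<open>x < b\<close> with \<open>x a \<equiv> n (mod b)\<close> forces
  \<open>x a \<le> (b - 1) a < n + b\<close>, so \<open>n - x a\<close> is a non-negative multiple of \<open>b\<close>.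
  Conversely, \<open>(a - 1)(b - 1) = r a + s b\<close> gives \<open>a b + 1 = (r + 1) a + (s + 1) b\<close>,
  so \<open>gcd a b\<close> divides 1. The statement with a common divisor \<open>d\<close> reduces to this
  one for \<open>a/d\<close> and \<open>b/d\<close>.\<close>

lemma nat_combination_if_coprime:
  fixes a b n :: nat
  assumes "coprime a b" and "a > 0" and "b > 0" and "(a - 1) * (b - 1) \<le> n"
  shows "\<exists>x y. n = x * a + y * b"
proof -
  obtain u where u: "[a * u = 1] (mod b)"
    using cong_solve_coprime_nat [OF \<open>coprime a b\<close>] by auto
  define x where "x = n * u mod b"
  have "[x * a = n * u * a] (mod b)"
    unfolding x_def by (simp add: cong_def mod_mult_left_eq)
  also have "[n * u * a = n * 1] (mod b)"
    using cong_scalar_left [OF u, of n] by (simp add: ac_simps)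
  finally have cong: "[x * a = n] (mod b)" by simp
  have "x < b"
    using \<open>b > 0\<close> by (simp add: x_def)
  then have "x * a \<le> (b - 1) * a"
    by (intro mult_right_mono) auto
  also have "(b - 1) * a = (a - 1) * (b - 1) + (b - 1)"
    using \<open>a > 0\<close> \<open>b > 0\<close> by (cases a; cases b) simp_all
  finally have small: "x * a < n + b"
    using assms(3,4) by linarith
  have "x * a \<le> n"
  proof (rule ccontr)
    assume "\<not> x * a \<le> n"
    then have "n \<le> x * a" by simp
    then obtain q where q: "x * a = q * b + n"
      using cong_le_nat cong by blast
    with \<open>\<not> x * a \<le> n\<close> have "q \<noteq> 0" by auto
    with q small show False by (cases q) auto
  qed
  then obtain y where "n = y * b + x * a"
    using cong cong_le_nat [of "x * a" n b] cong_sym by blast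
  then have "n = x * a + y * b" by simp
  then show ?thesis by blast
qed

lemma coprime_if_frobenius_combination:
  fixes a b r s :: nat
  assumes "a > 0" and "b > 0" and "(a - 1) * (b - 1) = r * a + s * b"
  shows "coprime a b"
proof (rule coprimeI)
  fix g assume "g dvd a" and "g dvd b"
  have "a * b + 1 = (a - 1) * (b - 1) + a + b"
    using assms(1,2) by (cases a; cases b) (auto simp: algebra_simps)
  also have "\<dots> = (r + 1) * a + (s + 1) * b"
    using assms(3) by (simp add: algebra_simps)
  finally have "g dvd a * b + 1"
    using \<open>g dvd a\<close> \<open>g dvd b\<close> by simp
  moreover have "g dvd a * b"
    using \<open>g dvd a\<close> by simp
  ultimately have "g dvd 1"
    using dvd_add_right_iff by blast
  then show "is_unit g" .
qed

lemma coprime_iff_frobenius_combination: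
  fixes a b :: nat
  assumes "a > 0" and "b > 0"
  shows "coprime a b \<longleftrightarrow> (\<exists>r s. (a - 1) * (b - 1) = r * a + s * b)"
  using nat_combination_if_coprime [OF _ assms order.refl] coprime_if_frobenius_combination [OF assms]
  by blast

lemma gcd_eq_iff_coprime_div:
  fixes a b d :: nat
  assumes "d > 0" and "d dvd a" and "d dvd b"
  shows "gcd a b = d \<longleftrightarrow> coprime (a div d) (b div d)"
proof -
  obtain a' b' where "a = d * a'" and "b = d * b'"
    using assms(2,3) by (auto simp: dvd_def)
  with \<open>d > 0\<close> show ?thesis
    by (simp add: gcd_mult_left coprime_iff_gcd_eq_1)
qed

theorem theorem4p11:
  fixes a b d :: nat
  assumes "a > 0" and "b > 0" and "d > 1"
  shows "(coprime a b \<longleftrightarrow> (\<exists>r s :: nat. (a - 1) * (b - 1) = r * a + s * b))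
     \<and> (d dvd a \<longrightarrow> d dvd b \<longrightarrow>
          (gcd a b = d \<longleftrightarrow> (\<exists>r s :: nat. d * (a div d - 1) * (b div d - 1) = r * a + s * b)))"
proof (intro conjI impI)
  show "coprime a b \<longleftrightarrow> (\<exists>r s :: nat. (a - 1) * (b - 1) = r * a + s * b)"
    using coprime_iff_frobenius_combination assms by blast
  assume "d dvd a" and "d dvd b"
  then obtain a' b' where a: "a = d * a'" and b: "b = d * b'"
    by (auto simp: dvd_def)
  have "d > 0" using \<open>d > 1\<close> by simp
  have "a' > 0" and "b' > 0" using assms a b by auto
  have scale: "d * (a div d - 1) * (b div d - 1) = r * a + s * b
      \<longleftrightarrow> (a' - 1) * (b' - 1) = r * a' + s * b'" for r s
  proof -
    have "d * (a div d - 1) * (b div d - 1) = d * ((a' - 1) * (b' - 1))"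
      using \<open>d > 0\<close> by (simp add: a b)
    moreover have "r * a + s * b = d * (r * a' + s * b')"
      by (simp add: a b algebra_simps)
    ultimately show ?thesis
      using \<open>d > 0\<close> by simp
  qed
  have "gcd a b = d \<longleftrightarrow> coprime a' b'"
    using gcd_eq_iff_coprime_div [OF \<open>d > 0\<close> \<open>d dvd a\<close> \<open>d dvd b\<close>] \<open>d > 0\<close> by (simp add: a b)
  also have "\<dots> \<longleftrightarrow> (\<exists>r s. (a' - 1) * (b' - 1) = r * a' + s * b')"
    using coprime_iff_frobenius_combination \<open>a' > 0\<close> \<open>b' > 0\<close> by blast
  finally show "gcd a b = d \<longleftrightarrow> (\<exists>r s. d * (a div d - 1) * (b div d - 1) = r * a + s * b)"
    by (simp only: scale)
qed

end
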